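(* Let $K=\mathbb{Q}(\sqrt{d})$ with $d>1$ a square-free positive integer. Then $K$ is unit reducible if and only if $d$ is of one of the following types: (T1) $d=m^2+1$ with $m\in\mathbb{N}$ odd; (T2) $d=m^2-1$ with $m\in\mathbb{N}$ even; (T3) $d=m^2+4$ with $m\in\mathbb{N}$ odd; (T4) $d=m^2-4$ with $m\in\mathbb{N}$ odd and $m>3$.
   Context: For a totally real number field $K$ with ring of integers $\mathcal{O}_K$ and unit group $\mathcal{O}_K^\times$, let $K_{>>0}$ be the set of totally positive elements and, for $a\in K_{>>0}$, $\mu(a)=\min_{x\in\mathcal{O}_K\setminus\{0\}}\mathrm{Tr}_{K/\mathbb{Q}}(ax^2)$. $K$ is called unit reducible if $\mu(a)=\min_{u\in\mathcal{O}_K^\times}\mathrm{Tr}_{K/\mathbb{Q}}(au^2)$ for all $a\in K_{>>0}$. *)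

theory Defs
  imports Complex_Main "HOL-Computational_Algebra.Polynomial" "HOL-Computational_Algebra.Squarefree"
begin

text \<open>The real quadratic field K = Q(sqrt d), realised as a subfield of the reals
  (via its first real embedding).\<close>
definition qfield :: "nat \<Rightarrow> real set" where
  "qfield d = {x. \<exists>a b :: rat. x = of_rat a + of_rat b * sqrt (real d)}"

definition qconj :: "nat \<Rightarrow> real \<Rightarrow> real" where
  "qconj d x = (THE y. \<exists>a b :: rat. x = of_rat a + of_rat b * sqrt (real d)
                                   \<and> y = of_rat a - of_rat b * sqrt (real d))"

definition qtrace :: "nat \<Rightarrow> real \<Rightarrow> real" where
  "qtrace d x = x + qconj d x"

definition qints :: "nat \<Rightarrow> real set" where
  "qints d = {x \<in> qfield d. algebraic_int x}"

definition qunits :: "nat \<Rightarrow> real set" where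
  "qunits d = {u \<in> qints d. \<exists>v \<in> qints d. u * v = 1}"

definition qtotpos :: "nat \<Rightarrow> real set" where
  "qtotpos d = {a \<in> qfield d. a > 0 \<and> qconj d a > 0}"

definition qmu :: "nat \<Rightarrow> real \<Rightarrow> real" where
  "qmu d a = Inf ((\<lambda>x. qtrace d (a * x^2)) ` (qints d - {0}))"

definition unit_reducible :: "nat \<Rightarrow> bool" where
  "unit_reducible d \<longleftrightarrow>
     (\<forall>a \<in> qtotpos d. qmu d a = Inf ((\<lambda>u. qtrace d (a * u^2)) ` qunits d))"

end

theory Submission
  imports Defs
begin

text \<open>
  The integers of \<open>K = \<rat>(sqrt d)\<close> are the numbers \<open>(P + Q sqrt d)/2\<close> with
  \<open>P\<^sup>2 \<equiv> d Q\<^sup>2 (mod 4)\<close>, the units those with \<open>P\<^sup>2 - d Q\<^sup>2 = \<plusminus>4\<close>. Let \<open>\<epsilon> > 1\<close> be the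
  fundamental unit. For totally positive \<open>a\<close>, \<open>Tr (a y\<^sup>2) = a y\<^sup>2 + a' y'\<^sup>2\<close> is a positive linear
  function of the point \<open>(y\<^sup>2, y'\<^sup>2)\<close>, and the units give the points \<open>(\<epsilon>\<^bsup>2k\<^esup>, \<epsilon>\<^bsup>-2k\<^esup>)\<close> on the
  hyperbola \<open>s t = 1\<close>. Hence \<open>K\<close> is unit reducible iff every nonzero integer \<open>y\<close> satisfies
  \<open>y\<^sup>2 + \<epsilon>\<^sup>2 y'\<^sup>2 \<ge> 1 + \<epsilon>\<^sup>2\<close>, i.e. lies on or above the line through the unit points \<open>(1, 1)\<close>
  and \<open>(\<epsilon>\<^sup>2, \<epsilon>\<^bsup>-2\<^esup>)\<close>. If it does, \<open>y\<close> scaled by a unit into \<open>1 \<le> y\<^sup>2 \<le> \<epsilon>\<^sup>2\<close> has trace at least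
  that of one of these two units; if it does not, \<open>Tr (c y\<^sup>2) < Tr (c u\<^sup>2)\<close> for all units \<open>u\<close>,
  where \<open>c\<close> is totally positive with \<open>c' = \<epsilon>\<^sup>2 c\<close>.

  For \<open>\<epsilon> = (A + B sqrt d)/2\<close> this becomes an integral quadratic inequality in \<open>(P, Q)\<close>. It fails
  for \<open>Q = 2\<close>, or \<open>Q = 1\<close> when \<open>d mod 4 = 1\<close>, and \<open>P \<equiv> Q (mod 2)\<close> nearest to \<open>B d Q / A\<close>,
  resp. \<open>A Q / B\<close> (according as \<open>\<epsilon> \<epsilon>' = 1\<close> or \<open>-1\<close>), unless \<open>B = 1\<close>, or \<open>B = 2\<close> and
  \<open>d mod 4 \<noteq> 1\<close>. These two cases give exactly the four families, for which the inequality is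
  verified directly. A unit \<open>> 1\<close> exists by unit reducibility itself: otherwise
  \<open>Tr (a x\<^sup>2) < Tr a\<close> for \<open>x = \<lfloor>sqrt d\<rfloor> + sqrt d\<close> and a totally positive \<open>a\<close> with \<open>a \<ll> a'\<close>.
\<close>

section \<open>Squarefree integers and irrationality\<close>

lemma squarefree_square_dvd_imp_abs_1:
  assumes "squarefree d" "(t::int)^2 dvd int d"
  shows "\<bar>t\<bar> = 1"
proof -
  have "int ((nat \<bar>t\<bar>)^2) = t^2" by simp
  then have "(nat \<bar>t\<bar>)^2 dvd d" using assms(2) by (metis int_dvd_int_iff)
  then have "nat \<bar>t\<bar> dvd 1" using assms(1) squarefreeD by blast
  then show ?thesis by simp
qed

lemma squarefree_not_4_dvd:
  assumes "squarefree d"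
  shows "\<not> (4::int) dvd int d"
proof
  assume "(4::int) dvd int d"
  then have "(2::int)^2 dvd int d" by simp
  with assms show False using squarefree_square_dvd_imp_abs_1 by fastforce
qed

lemma squarefree_mult_square_Ints_imp_Ints:
  assumes "squarefree d" "q \<in> \<rat>" "real d * q^2 \<in> \<int>"
  shows "q \<in> \<int>"
proof -
  from assms(2) obtain s t where st: "t > 0" "coprime s t" "q = of_int s / of_int t"
    by (auto elim: Rats_cases')
  from assms(3) obtain k where "real d * q^2 = of_int k" by (auto elim: Ints_cases)
  then have "real_of_int (int d * s^2) = real_of_int (k * t^2)"
    using st by (simp add: field_simps power2_eq_square)
  then have "int d * s^2 = k * t^2" by (simp only: of_int_eq_iff)
  then have "t^2 dvd int d * s^2" by simp
  moreover have "coprime (t^2) (s^2)" using st by (simp add: coprime_commute)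
  ultimately have "t^2 dvd int d" using coprime_dvd_mult_left_iff by blast
  then have "\<bar>t\<bar> = 1" by (rule squarefree_square_dvd_imp_abs_1[OF assms(1)])
  with st show ?thesis by simp
qed

lemma sqrt_squarefree_irrational:
  assumes "squarefree d" "d > 1"
  shows "sqrt (real d) \<notin> \<rat>"
proof
  assume "sqrt (real d) \<in> \<rat>"
  moreover have "algebraic_int (sqrt (real d))"
    by (intro algebraic_int_sqrt int_imp_algebraic_int) simp
  ultimately obtain k where "sqrt (real d) = of_int k"
    using rational_algebraic_int_is_int by (metis Ints_cases)
  then have "real_of_int (int d) = real_of_int (k^2)"
    by (metis of_int_of_nat_eq of_int_power of_nat_0_le_iff real_sqrt_pow2)
  then have "int d = k^2" by (simp only: of_int_eq_iff)
  then have "\<bar>k\<bar> = 1" using assms(1) squarefree_square_dvd_imp_abs_1 by simp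
  then have "k^2 = 1" by (simp add: abs_eq_iff' power2_eq_1_iff)
  then show False using \<open>int d = k^2\<close> assms(2) by simp
qed

section \<open>Integral polynomials and Gauss's lemma\<close>

lemma Rats_common_denominator:
  assumes "a \<in> \<rat>" "b \<in> \<rat>"
  obtains u v w :: int where "0 < w" "a = of_int u / of_int w" "b = of_int v / of_int w"
proof -
  obtain ua wa where a: "0 < wa" "a = of_int ua / of_int wa" using assms(1)
    by (auto elim: Rats_cases')
  obtain ub wb where b: "0 < wb" "b = of_int ub / of_int wb" using assms(2)
    by (auto elim: Rats_cases')
  show thesis by (rule that[of "wa * wb" "ua * wb" "ub * wa"]) (use a b in auto)
qed

lemma poly_map_poly_of_int_add:
  "poly (map_poly of_int (p + q)) (x :: 'a :: comm_ring_1) =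
     poly (map_poly of_int p) x + poly (map_poly of_int q) x"
proof -
  have "map_poly (of_int :: int \<Rightarrow> 'a) (p + q) = map_poly of_int p + map_poly of_int q"
    by (rule poly_eqI) (simp add: coeff_map_poly)
  then show ?thesis by simp
qed

lemma poly_map_poly_of_int_smult:
  "poly (map_poly of_int (smult c p)) (x :: 'a :: comm_ring_1) =
     of_int c * poly (map_poly of_int p) x"
  by (simp add: map_poly_smult)

lemma poly_map_poly_of_int_mult:
  "poly (map_poly of_int (p * q)) (x :: 'a :: comm_ring_1) =
     poly (map_poly of_int p) x * poly (map_poly of_int q) x"
proof (induction p)
  case (pCons a p)
  have "pCons a p * q = smult a q + pCons 0 (p * q)" by simp
  then show ?case using pCons
    by (simp add: poly_map_poly_of_int_add poly_map_poly_of_int_smult map_poly_pCons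
        algebra_simps del: mult_pCons_left)
qed simp

text \<open>Pseudo-dividing a monic integral polynomial vanishing at \<open>x\<close> by the primitive part of \<open>M\<close>
  leaves a remainder of smaller degree vanishing at \<open>x\<close>, hence zero; comparing contents and leading
  coefficients of the quotient shows that the primitive part is monic up to sign.\<close>
lemma algebraic_int_minimal_poly_lead_coeff_dvd:
  fixes x :: "'a :: field_char_0" and M :: "int poly"
  assumes "algebraic_int x" "M \<noteq> 0" "poly (map_poly of_int M) x = 0"
    and minimal: "\<And>R. degree R < degree M \<Longrightarrow> poly (map_poly of_int R) x = 0 \<Longrightarrow> R = 0"
  shows "lead_coeff M dvd coeff M i"
proof -
  obtain p where p: "poly (map_poly of_int p) x = 0" "lead_coeff p = 1"
    using assms(1) by (auto simp: algebraic_int_altdef_ipoly)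
  define M1 where "M1 = primitive_part M"
  define e where "e = lead_coeff M1"
  define k where "k = Suc (degree p) - degree M1"
  have M: "M = smult (content M) M1" by (simp add: M1_def)
  have "M1 \<noteq> 0" "degree M1 = degree M" using assms(2) by (simp_all add: M1_def)
  have M1_root: "poly (map_poly of_int M1) x = 0"
    using assms(2,3) M
      by (metis content_eq_zero_iff mult_eq_0_iff of_int_eq_0_iff poly_map_poly_of_int_smult)
  obtain q R where "pseudo_divmod p M1 = (q, R)" by force
  from pseudo_divmod[OF \<open>M1 \<noteq> 0\<close> this]
  have div: "smult (e ^ k) p = M1 * q + R" and "R = 0 \<or> degree R < degree M1"
    by (simp_all add: e_def k_def)
  moreover have "poly (map_poly of_int R) x = 0"
    using arg_cong[OF div, of "\<lambda>s. poly (map_poly of_int s) x"] p M1_root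
    by (simp add: poly_map_poly_of_int_smult poly_map_poly_of_int_add poly_map_poly_of_int_mult)
  ultimately have "R = 0" using minimal \<open>degree M1 = degree M\<close> by auto
  with div have div': "smult (e ^ k) p = M1 * q" by simp
  have "is_unit (content p)" using content_dvd_coeff[of p "degree p"] p(2) by simp
  then have "content p = 1" using normalize_content[of p] by simp
  then have "content q = normalize (e ^ k)"
    using arg_cong[OF div', of content] assms(2) by (simp add: content_mult M1_def)
  then have "e ^ k dvd lead_coeff q" using content_dvd_coeff[of q "degree q"] by simp
  moreover have "e ^ k = e * lead_coeff q"
    using arg_cong[OF div', of lead_coeff] p(2) \<open>M1 \<noteq> 0\<close> by (simp add: lead_coeff_mult e_def)
  moreover have "lead_coeff q \<noteq> 0"
    using calculation(2) \<open>M1 \<noteq> 0\<close> by (auto simp: e_def)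
  ultimately have "is_unit e" by (metis dvd_mult_cancel_right mult_1_left)
  then have "lead_coeff M dvd content M"
    using M by (metis e_def lead_coeff_smult dvd_mult_unit_iff dvd_refl)
  then show ?thesis using content_dvd_coeff dvd_trans by blast
qed

lemma irrational_no_linear_int_poly_root:
  fixes x :: "'a :: field_char_0" and R :: "int poly"
  assumes "x \<notin> \<rat>" "degree R < 2" "poly (map_poly of_int R) x = 0"
  shows "R = 0"
proof -
  define c0 c1 where "c0 = coeff R 0" and "c1 = coeff R 1"
  have R: "R = [:c0, c1:]"
    using assms(2) unfolding c0_def c1_def
    by (intro poly_eqI) (auto simp: coeff_pCons coeff_eq_0 split: nat.splits)
  then have root: "of_int c0 + of_int c1 * x = 0"
    using assms(3) by (simp add: map_poly_pCons algebra_simps)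
  have "c1 = 0"
  proof (rule ccontr)
    assume "c1 \<noteq> 0"
    then have "x = - of_int c0 / of_int c1" using root by (simp add: field_simps add_eq_0_iff2)
    then show False using assms(1) by simp
  qed
  with root R show ?thesis by simp
qed

lemma cInf_eq_if_dominated:
  fixes A B :: "'a :: conditionally_complete_linorder set"
  assumes "A \<subseteq> B" "A \<noteq> {}" "bdd_below B" "\<And>b. b \<in> B \<Longrightarrow> \<exists>a\<in>A. a \<le> b"
  shows "Inf B = Inf A"
proof (rule antisym)
  show "Inf B \<le> Inf A" by (rule cInf_superset_mono[OF assms(2,3,1)])
  have "bdd_below A" using assms(3,1) by (rule bdd_below_mono)
  show "Inf A \<le> Inf B"
  proof (rule cInf_greatest)
    show "B \<noteq> {}" using assms(1,2) by blast
    fix b assume "b \<in> B"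
    then obtain a where "a \<in> A" "a \<le> b" using assms(4) by blast
    then show "Inf A \<le> b" using cInf_lower[OF _ \<open>bdd_below A\<close>] order_trans by blast
  qed
qed

text \<open>The last hypothesis says that \<open>(s, t)\<close> lies above the chord of the hyperbola \<open>s t = 1\<close> from
  \<open>(1, 1)\<close> to \<open>(E, 1/E)\<close>.\<close>
lemma linear_ge_min_above_chord:
  fixes \<alpha> \<beta> s t E :: real
  assumes "0 \<le> \<alpha>" "0 \<le> \<beta>" "1 < E" "1 \<le> s" "s \<le> E" "1 + E \<le> s + E * t"
  shows "min (\<alpha> + \<beta>) (\<alpha> * E + \<beta> / E) \<le> \<alpha> * s + \<beta> * t"
proof -
  have "(1 + E - s) / E \<le> t" using assms(3,6) by (simp add: field_simps)
  then have "\<beta> * ((1 + E - s) / E) \<le> \<beta> * t" using assms(2) by (rule mult_left_mono)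
  then have "\<alpha> * s + \<beta> * ((1 + E - s) / E) \<le> \<alpha> * s + \<beta> * t" by simp
  moreover define c where "c = \<alpha> - \<beta> / E"
  have "\<alpha> * s + \<beta> * ((1 + E - s) / E) = (\<alpha> + \<beta>) + (s - 1) * c"
    "\<alpha> * s + \<beta> * ((1 + E - s) / E) = (\<alpha> * E + \<beta> / E) + (s - E) * c"
    using assms(3) by (simp_all add: c_def field_simps)
  moreover have "0 \<le> (s - 1) * c \<or> 0 \<le> (s - E) * c"
    using assms(4,5) by (cases "0 \<le> c") (auto intro: mult_nonneg_nonneg mult_nonpos_nonpos)
  ultimately show ?thesis by linarith
qed

lemma pos_mult_of_int_nonneg_iff:
  fixes c :: real
  assumes "0 < c"
  shows "0 \<le> c * of_int X \<longleftrightarrow> 0 \<le> X"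
  using assms by (simp add: zero_le_mult_iff)

lemma ex_power_int_bracket:
  fixes E s :: real
  assumes "1 < E" "0 < s"
  shows "\<exists>k. E powi k \<le> s \<and> s < E powi (k + 1)"
proof -
  have "E powr of_int \<lfloor>log E s\<rfloor> \<le> s \<and> s < E powr of_int (\<lfloor>log E s\<rfloor> + 1)"
    using floor_log_eq_powr_iff[OF assms(2,1)] by blast
  moreover have "E powr of_int j = E powi j" for j using assms(1) by (intro powr_real_of_int') auto
  ultimately show ?thesis by metis
qed

section \<open>Integral binary quadratic forms\<close>

lemma square_ge_1_if_nonzero:
  fixes x :: int
  assumes "x \<noteq> 0"
  shows "1 \<le> x^2"
proof -
  have "1 \<le> \<bar>x\<bar>" using assms by linarith
  then have "1 * 1 \<le> \<bar>x\<bar> * \<bar>x\<bar>" by (intro mult_mono) auto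
  then show ?thesis by (simp add: power2_eq_square)
qed

lemma even_square_ge_4:
  fixes x :: int
  assumes "even x" "x \<noteq> 0"
  shows "4 \<le> x^2"
proof -
  obtain k where "x = 2 * k" using assms(1) by (rule evenE)
  then show ?thesis using square_ge_1_if_nonzero[of k] assms(2) by (simp add: power_mult_distrib)
qed

lemma binary_quadratic_form_ge:
  fixes m c x y :: int
  assumes "2 * \<bar>c\<bar> \<le> m" "x \<noteq> 0 \<or> y \<noteq> 0"
  shows "m \<le> m * x^2 + 2 * c * x * y + m * y^2"
proof -
  have "0 \<le> (\<bar>x\<bar> - \<bar>y\<bar>)^2" by simp
  then have "2 * \<bar>x * y\<bar> \<le> x^2 + y^2" by (simp add: power2_diff abs_mult)
  then have "\<bar>c\<bar> * (2 * \<bar>x * y\<bar>) \<le> \<bar>c\<bar> * (x^2 + y^2)" by (rule mult_left_mono) simp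
  moreover have "- (c * (x * y)) \<le> \<bar>c\<bar> * \<bar>x * y\<bar>"
    using abs_ge_minus_self[of "c * (x * y)"] by (simp only: abs_mult)
  ultimately have form: "(m - \<bar>c\<bar>) * (x^2 + y^2) \<le> m * x^2 + 2 * c * x * y + m * y^2"
    by (simp add: algebra_simps)
  have "0 \<le> m" using assms(1) by simp
  consider "x = 0" | "y = 0" | "x \<noteq> 0" "y \<noteq> 0" by blast
  then show ?thesis
  proof cases
    case 1
    then show ?thesis using mult_left_mono[OF square_ge_1_if_nonzero \<open>0 \<le> m\<close>, of y] assms(2) by simp
  next
    case 2
    then show ?thesis using mult_left_mono[OF square_ge_1_if_nonzero \<open>0 \<le> m\<close>, of x] assms(2) by simp
  next
    case 3
    then have "2 \<le> x^2 + y^2" using square_ge_1_if_nonzero[of x] square_ge_1_if_nonzero[of y]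
      by linarith
    then have "(m - \<bar>c\<bar>) * 2 \<le> (m - \<bar>c\<bar>) * (x^2 + y^2)" using assms(1)
      by (intro mult_left_mono) auto
    moreover have "m \<le> (m - \<bar>c\<bar>) * 2" using assms(1) by simp
    ultimately show ?thesis using form by (meson order_trans)
  qed
qed

lemma sq_plus_1_form_ge:
  fixes m D P Q :: int
  assumes "D = m^2 + 1" "even P" "even Q" "P \<noteq> 0 \<or> Q \<noteq> 0"
  shows "4 \<le> P^2 + D * Q^2 - 2 * m * P * Q"
proof -
  have "P^2 + D * Q^2 - 2 * m * P * Q = (P - m * Q)^2 + Q^2"
    unfolding assms(1) by (simp add: power2_eq_square algebra_simps)
  moreover have "4 \<le> (P - m * Q)^2 + Q^2"
  proof (cases "Q = 0")
    case True
    then show ?thesis using even_square_ge_4[of P] assms(2,4) by simp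
  next
    case False
    then show ?thesis using even_square_ge_4[of Q] assms(3) zero_le_power2[of "P - m * Q"]
      by linarith
  qed
  ultimately show ?thesis by simp
qed

lemma sq_minus_1_form_ge:
  fixes m D p q :: int
  assumes "D = m^2 - 1" "2 \<le> m" "p \<noteq> 0 \<or> q \<noteq> 0"
  shows "m \<le> m * (p^2 + D * q^2) - 2 * D * p * q"
proof -
  have "m * (p^2 + D * q^2) - 2 * D * p * q = m * (p - m * q)^2 + 2 * (p - m * q) * q + m * q^2"
    unfolding assms(1) by (simp add: power2_eq_square algebra_simps)
  moreover have "p - m * q \<noteq> 0 \<or> q \<noteq> 0" using assms(3) by auto
  then have "m \<le> m * (p - m * q)^2 + 2 * (p - m * q) * q + m * q^2"
    using binary_quadratic_form_ge[of 1 m "p - m * q" q] assms(2) by simp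
  ultimately show ?thesis by simp
qed

lemma sq_plus_4_form_ge:
  fixes m D P Q :: int
  assumes "D = m^2 + 4" "4 dvd P^2 - D * Q^2" "P \<noteq> 0 \<or> Q \<noteq> 0"
  shows "4 \<le> P^2 + D * Q^2 - 2 * m * P * Q"
proof -
  have eq: "P^2 + D * Q^2 - 2 * m * P * Q = (P - m * Q)^2 + 4 * Q^2"
    unfolding assms(1) by (simp add: power2_eq_square algebra_simps)
  show ?thesis
  proof (cases "Q = 0")
    case True
    then have "4 dvd P^2" using assms(2) by simp
    then have "even (P^2)" using dvd_trans[of 2 4 "P^2"] by simp
    then show ?thesis using eq True assms(3) even_square_ge_4[of P] by simp
  next
    case False
    then show ?thesis using eq square_ge_1_if_nonzero[of Q] zero_le_power2[of "P - m * Q"]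
      by linarith
  qed
qed

lemma sq_minus_4_form_ge:
  fixes m D P Q :: int
  assumes "D = m^2 - 4" "odd m" "5 \<le> m" "even (P - Q)" "P \<noteq> 0 \<or> Q \<noteq> 0"
  shows "4 * m \<le> m * (P^2 + D * Q^2) - 2 * D * P * Q"
proof -
  have "even (P - m * Q)" using assms(2,4) by (auto simp: even_mult_iff)
  then obtain R where "P - m * Q = 2 * R" by (rule evenE)
  then have R: "P = m * Q + 2 * R" by simp
  have "m * (P^2 + D * Q^2) - 2 * D * P * Q = 4 * (m * R^2 + 4 * R * Q + m * Q^2)"
    unfolding R assms(1) by (simp add: power2_eq_square algebra_simps)
  moreover have "R \<noteq> 0 \<or> Q \<noteq> 0" using assms(5) R by auto
  then have "m \<le> m * R^2 + 4 * R * Q + m * Q^2"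
    using binary_quadratic_form_ge[of 2 m R Q] assms(3) by simp
  ultimately show ?thesis by simp
qed

lemma norm_pos_form_less:
  fixes A B D P Q :: int
  assumes "0 < A" "0 \<le> D" "A^2 - D * B^2 = 4" "(A * P - B * D * Q)^2 \<le> A^2" "4 * Q^2 < 3 * B^2"
  shows "A * (P^2 + D * Q^2) - 2 * B * D * P * Q < 4 * A"
proof -
  have "A * (A * (P^2 + D * Q^2) - 2 * B * D * P * Q - 4 * A)
      = (A * P - B * D * Q)^2 + D * Q^2 * (A^2 - D * B^2) - 4 * A^2"
    by (simp add: power2_eq_square algebra_simps)
  also have "\<dots> = (A * P - B * D * Q)^2 + 4 * (D * Q^2) - 4 * A^2" using assms(3) by simp
  also have "\<dots> < 0"
  proof -
    have "D * (4 * Q^2) \<le> D * (3 * B^2)" using assms(2,5) by (intro mult_left_mono) auto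
    moreover have "D * B^2 = A^2 - 4" using assms(3) by simp
    ultimately show ?thesis using assms(4) by (simp add: algebra_simps)
  qed
  finally show ?thesis using assms(1) by (simp add: mult_less_0_iff)
qed

lemma norm_neg_form_less:
  fixes A B D P Q :: int
  assumes "0 < B" "A^2 - D * B^2 = -4" "(B * P - A * Q)^2 \<le> B^2" "4 * Q^2 < 3 * B^2"
  shows "B * (P^2 + D * Q^2) - 2 * A * P * Q < 4 * B"
proof -
  have "B * (B * (P^2 + D * Q^2) - 2 * A * P * Q - 4 * B)
      = (B * P - A * Q)^2 - Q^2 * (A^2 - D * B^2) - 4 * B^2"
    by (simp add: power2_eq_square algebra_simps)
  also have "\<dots> < 0" using assms(2-4) by simp
  finally show ?thesis using assms(1) by (simp add: mult_less_0_iff)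
qed

lemma exists_same_parity_near:
  fixes A T Q :: int
  assumes "0 < A"
  shows "\<exists>P. even (P - Q) \<and> (A * P - T)^2 \<le> A^2"
proof -
  define z :: real where "z = (of_int T / of_int A - of_int Q) / 2"
  define P where "P = Q + 2 * round z"
  have eq: "of_int (A * P - T) = of_int A * (2 * (of_int (round z) - z))"
    using assms by (simp add: P_def z_def field_simps)
  have "\<bar>of_int (A * P - T)\<bar> = of_int A * (2 * \<bar>of_int (round z) - z\<bar>)"
    unfolding eq abs_mult using assms by simp
  also have "\<dots> \<le> of_int A * (2 * (1 / 2))"
    using of_int_round_abs_le[of z] assms by (intro mult_left_mono) auto
  finally have "\<bar>of_int (A * P - T)\<bar> \<le> (of_int A :: real)" by simp
  then have "\<bar>A * P - T\<bar> \<le> \<bar>A\<bar>" using assms by (simp only: of_int_abs[symmetric] of_int_le_iff)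
  then have "(A * P - T)^2 \<le> A^2" by (simp add: abs_le_square_iff)
  moreover have "even (P - Q)" by (simp add: P_def)
  ultimately show ?thesis by blast
qed

lemma squarefree_pell_4_coeff_2:
  fixes A :: int
  assumes "squarefree d" "0 < A" "A^2 - int d * 2^2 = 4 \<or> A^2 - int d * 2^2 = -4"
    and "int d mod 4 \<noteq> 1"
  shows "(\<exists>m::nat. odd m \<and> int d = int m ^ 2 + 1) \<or> (\<exists>m::nat. even m \<and> int d = int m ^ 2 - 1)"
proof -
  have "A^2 = 2 * (2 * (int d + 1)) \<or> A^2 = 2 * (2 * (int d - 1))" using assms(3) by auto
  then have "even (A^2)" by (metis dvd_triv_left)
  then obtain k where k: "A = 2 * k" by (auto elim: evenE)
  have "0 < k" using k assms(2) by simp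
  from assms(3) show ?thesis
  proof
    assume "A^2 - int d * 2^2 = 4"
    then have d: "int d = k^2 - 1" using k by (simp add: power2_eq_square algebra_simps)
    have "even k"
    proof (rule ccontr)
      assume "odd k"
      then obtain j where "k = 2 * j + 1" by (rule oddE)
      then have "int d = 4 * (j^2 + j)" using d by (simp add: power2_eq_square algebra_simps)
      then show False using squarefree_not_4_dvd[OF assms(1)] by simp
    qed
    then show ?thesis using d \<open>0 < k\<close> by (intro disjI2 exI[of _ "nat k"]) (simp add: even_nat_iff)
  next
    assume "A^2 - int d * 2^2 = -4"
    then have d: "int d = k^2 + 1" using k by (simp add: power2_eq_square algebra_simps)
    have "odd k"
    proof
      assume "even k"
      then obtain j where "k = 2 * j" by (rule evenE)
      then have "int d = 4 * j^2 + 1" using d by (simp add: power2_eq_square algebra_simps)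
      then show False using assms(4) by simp
    qed
    then show ?thesis using d \<open>0 < k\<close> by (intro disjI1 exI[of _ "nat k"]) (simp add: even_nat_iff)
  qed
qed

lemma squarefree_pell_4_coeff_1:
  fixes A :: int
  assumes "squarefree d" "1 < d" "0 < A" "A^2 - int d = 4 \<or> A^2 - int d = -4"
  shows "(\<exists>m::nat. odd m \<and> int d = int m ^ 2 + 4) \<or>
    (\<exists>m::nat. odd m \<and> 3 < m \<and> int d = int m ^ 2 - 4)"
proof -
  have "odd A"
  proof
    assume "even A"
    then obtain j where "A = 2 * j" by (rule evenE)
    then have "int d = 4 * (j^2 - 1) \<or> int d = 4 * (j^2 + 1)"
      using assms(4) by (auto simp: power2_eq_square algebra_simps)
    then show False using squarefree_not_4_dvd[OF assms(1)] by auto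
  qed
  from assms(4) show ?thesis
  proof
    assume d: "A^2 - int d = 4"
    have "2 < A"
    proof (rule ccontr)
      assume "\<not> 2 < A"
      then have "A = 1 \<or> A = 2" using assms(3) by linarith
      then show False using d assms(2) by auto
    qed
    consider "A = 3" | "3 < A" using \<open>2 < A\<close> by linarith
    then show ?thesis
    proof cases
      case 1
      then have "int d = int 1 ^ 2 + 4" using d by simp
      then show ?thesis by (intro disjI1 exI[of _ 1]) simp
    next
      case 2
      then show ?thesis using d \<open>odd A\<close>
        by (intro disjI2 exI[of _ "nat A"]) (simp add: even_nat_iff)
    qed
  next
    assume "A^2 - int d = -4"
    then show ?thesis using \<open>odd A\<close> assms(3)
      by (intro disjI1 exI[of _ "nat A"]) (simp add: even_nat_iff)
  qed
qed

section \<open>The field, its integers and its units\<close>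

locale real_quadratic_field =
  fixes d :: nat
  assumes d_gt_1: "d > 1" and squarefree_d: "squarefree d"
begin

abbreviation sqd :: real where "sqd \<equiv> sqrt (real d)"

abbreviation \<sigma> :: "real \<Rightarrow> real" where "\<sigma> \<equiv> qconj d"

lemma sqd_gt_1: "sqd > 1"
  using d_gt_1 by simp

lemma sqd_square: "sqd * sqd = real d"
  by simp

lemma qcoords_unique:
  assumes "a \<in> \<rat>" "b \<in> \<rat>" "a' \<in> \<rat>" "b' \<in> \<rat>" "a + b * sqd = a' + b' * sqd"
  shows "a = a' \<and> b = b'"
proof (cases "b = b'")
  case False
  then have "sqd = (a - a') / (b' - b)" using assms(5) by (simp add: field_simps)
  then have "sqd \<in> \<rat>" using assms(1-4) by simp
  then show ?thesis using sqrt_squarefree_irrational[OF squarefree_d d_gt_1] by simp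
qed (use assms(5) in simp)

lemma qfield_iff: "x \<in> qfield d \<longleftrightarrow> (\<exists>a\<in>\<rat>. \<exists>b\<in>\<rat>. x = a + b * sqd)"
  unfolding qfield_def by (auto simp: Rats_def)

lemma qconj_eq:
  assumes "a \<in> \<rat>" "b \<in> \<rat>"
  shows "\<sigma> (a + b * sqd) = a - b * sqd"
  unfolding qconj_def
proof (rule the_equality)
  show "\<exists>a' b'. a + b * sqd = of_rat a' + of_rat b' * sqd \<and>
    a - b * sqd = of_rat a' - of_rat b' * sqd"
    using assms by (auto simp: Rats_def)
next
  fix y assume "\<exists>a' b'. a + b * sqd = of_rat a' + of_rat b' * sqd \<and> y = of_rat a' - of_rat b' * sqd"
  then obtain a' b'
    where h: "a + b * sqd = of_rat a' + of_rat b' * sqd" "y = of_rat a' - of_rat b' * sqd"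
    by blast
  with qcoords_unique[OF assms _ _ h(1)] show "y = a - b * sqd" by simp
qed

lemma qconj_Rats: "a \<in> \<rat> \<Longrightarrow> \<sigma> a = a"
  using qconj_eq[of a 0] by simp

lemma qfield_mult_and_qconj_mult:
  assumes "x \<in> qfield d" "y \<in> qfield d"
  shows "x * y \<in> qfield d \<and> \<sigma> (x * y) = \<sigma> x * \<sigma> y"
proof -
  obtain a b a' b' where ab: "a \<in> \<rat>" "b \<in> \<rat>" "x = a + b * sqd"
    and ab': "a' \<in> \<rat>" "b' \<in> \<rat>" "y = a' + b' * sqd"
    using assms by (auto simp: qfield_iff)
  have xy: "x * y = (a * a' + b * b' * real d) + (a * b' + a' * b) * sqd"
    using ab(3) ab'(3) sqd_square by (simp add: algebra_simps)
  have "(a - b * sqd) * (a' - b' * sqd) = (a * a' + b * b' * real d) - (a * b' + a' * b) * sqd"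
    using sqd_square by (simp add: algebra_simps)
  moreover have "\<sigma> (x * y) = (a * a' + b * b' * real d) - (a * b' + a' * b) * sqd"
    unfolding xy using ab ab' by (intro qconj_eq) auto
  ultimately have "\<sigma> (x * y) = \<sigma> x * \<sigma> y"
    using ab ab' by (simp add: qconj_eq)
  moreover have "x * y \<in> qfield d"
    unfolding xy qfield_iff using ab ab'
    by (intro bexI[of _ "a * a' + b * b' * real d"] bexI[of _ "a * b' + a' * b"]) auto
  ultimately show ?thesis by simp
qed

lemma qfield_mult: "x \<in> qfield d \<Longrightarrow> y \<in> qfield d \<Longrightarrow> x * y \<in> qfield d"
  using qfield_mult_and_qconj_mult by blast

lemma qconj_mult: "x \<in> qfield d \<Longrightarrow> y \<in> qfield d \<Longrightarrow> \<sigma> (x * y) = \<sigma> x * \<sigma> y"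
  using qfield_mult_and_qconj_mult by blast

lemma qtrace_mult_square:
  assumes "a \<in> qfield d" "x \<in> qfield d"
  shows "qtrace d (a * x^2) = a * x^2 + \<sigma> a * (\<sigma> x)^2"
  using assms by (simp add: qtrace_def power2_eq_square qconj_mult qfield_mult)

definition qhalf :: "int \<Rightarrow> int \<Rightarrow> real" where
  "qhalf P Q = (of_int P + of_int Q * sqd) / 2"

definition integral_coords :: "int \<Rightarrow> int \<Rightarrow> bool" where
  "integral_coords P Q \<longleftrightarrow> 4 dvd P^2 - int d * Q^2"

lemma qhalf_qfield: "qhalf P Q \<in> qfield d"
  unfolding qhalf_def qfield_iff
  by (intro bexI[of _ "of_int P / 2"] bexI[of _ "of_int Q / 2"]) (auto simp: field_simps)

lemma qconj_qhalf: "\<sigma> (qhalf P Q) = qhalf P (- Q)"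
proof -
  have "\<sigma> (of_int P / 2 + (of_int Q / 2) * sqd) = of_int P / 2 - (of_int Q / 2) * sqd"
    by (rule qconj_eq) auto
  then show ?thesis by (simp add: qhalf_def field_simps)
qed

lemma qhalf_norm: "qhalf P Q * qhalf P (- Q) = of_int (P^2 - int d * Q^2) / 4"
  unfolding qhalf_def using sqd_square by (simp add: algebra_simps power2_eq_square)

lemma qhalf_eq_0_iff: "qhalf P Q = 0 \<longleftrightarrow> P = 0 \<and> Q = 0"
proof
  assume "qhalf P Q = 0"
  then have "of_int P + of_int Q * sqd = 0 + 0 * sqd" by (simp add: qhalf_def)
  then show "P = 0 \<and> Q = 0" using qcoords_unique[of "of_int P" "of_int Q" 0 0] by simp
qed (simp add: qhalf_def)

lemma qhalf_gt_1: "0 < A \<Longrightarrow> 0 < B \<Longrightarrow> 1 < qhalf A B"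
proof -
  assume "0 < A" "0 < B"
  then have "1 \<le> real_of_int A" "1 \<le> real_of_int B" by simp_all
  moreover have "sqd \<le> real_of_int B * sqd" using mult_right_mono[OF \<open>1 \<le> real_of_int B\<close>, of sqd]
    by simp
  ultimately have "2 < of_int A + of_int B * sqd" using sqd_gt_1 by linarith
  then show ?thesis unfolding qhalf_def by simp
qed

lemma qhalf_in_qints:
  assumes "integral_coords P Q"
  shows "qhalf P Q \<in> qints d"
proof -
  from assms obtain N where N: "P^2 - int d * Q^2 = 4 * N" by (auto simp: integral_coords_def)
  then have "of_int N = (of_int P ^ 2 - real d * of_int Q ^ 2) / (4 :: real)"
    by (simp flip: of_int_eq_iff[where 'a=real])
  then have "poly [:of_int N, - of_int P, 1:] (qhalf P Q) = 0"
    unfolding qhalf_def using sqd_square by (simp add: field_simps power2_eq_square)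
  then have "algebraic_int (qhalf P Q)"
    by (intro algebraic_int.intros[of "[:of_int N, - of_int P, 1:]"])
       (auto simp: coeff_pCons split: nat.splits)
  then show ?thesis using qhalf_qfield by (simp add: qints_def)
qed

lemma qfield_irrational:
  assumes "a \<in> \<rat>" "b \<in> \<rat>" "b \<noteq> 0"
  shows "a + b * sqd \<notin> \<rat>"
proof
  assume "a + b * sqd \<in> \<rat>"
  then have "(a + b * sqd - a) / b \<in> \<rat>" using assms(1,2) by (intro Rats_divide Rats_diff)
  moreover have "(a + b * sqd - a) / b = sqd" using assms(3) by simp
  ultimately have "sqd \<in> \<rat>" by simp
  then show False using sqrt_squarefree_irrational[OF squarefree_d d_gt_1] by simp
qed

text \<open>The minimal polynomial of \<open>a + b sqrt d\<close>, cleared of denominators, is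
  \<open>w\<^sup>2 X\<^sup>2 - 2 u w X + (u\<^sup>2 - d v\<^sup>2)\<close> where \<open>a = u/w\<close> and \<open>b = v/w\<close>.\<close>
lemma algebraic_int_qcoords_Ints:
  assumes "algebraic_int (a + b * sqd)" "a \<in> \<rat>" "b \<in> \<rat>" "b \<noteq> 0"
  shows "2 * a \<in> \<int>" "a^2 - real d * b^2 \<in> \<int>"
proof -
  obtain u v w where uvw: "0 < w" "a = of_int u / of_int w" "b = of_int v / of_int w"
    using Rats_common_denominator[OF assms(2,3)] .
  define M :: "int poly" where "M = [:u^2 - int d * v^2, -2 * u * w, w^2:]"
  have "degree M = 2" "M \<noteq> 0" "lead_coeff M = w^2"
    using uvw(1) by (simp_all add: M_def numeral_2_eq_2)
  moreover have "poly (map_poly of_int M) (a + b * sqd) = 0"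
    unfolding M_def uvw using uvw(1) sqd_square
      by (simp add: map_poly_pCons field_simps power2_eq_square)
  ultimately have "lead_coeff M dvd coeff M i" for i
    using algebraic_int_minimal_poly_lead_coeff_dvd[OF assms(1)] qfield_irrational[OF assms(2-4)]
      irrational_no_linear_int_poly_root by metis
  from this[of 0] this[of 1] have "w^2 dvd u^2 - int d * v^2" "w^2 dvd -2 * u * w"
    using \<open>lead_coeff M = w^2\<close> by (simp_all add: M_def)
  then obtain k0 k1 where k0: "u^2 - int d * v^2 = w^2 * k0" and k1: "-2 * u * w = w^2 * k1"
    by (elim dvdE)
  have "w * (2 * u) = w * (- k1 * w)" using k1 by (simp add: algebra_simps power2_eq_square)
  then have "2 * u = - k1 * w" using uvw(1) mult_left_cancel[of w] by (metis less_irrefl)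
  then have "real_of_int (2 * u) = real_of_int (- k1 * w)" by (simp only:)
  then have "2 * a = - of_int k1" unfolding uvw(2) using uvw(1) by (simp add: field_simps)
  then show "2 * a \<in> \<int>" by simp
  have "a^2 - real d * b^2 = of_int k0"
    using arg_cong[OF k0, of real_of_int] uvw(1) unfolding uvw(2,3)
    by (simp add: field_simps power2_eq_square)
  then show "a^2 - real d * b^2 \<in> \<int>" by simp
qed

lemma qints_trace_norm_Ints:
  assumes "x \<in> qints d"
  shows "x + \<sigma> x \<in> \<int>" "x * \<sigma> x \<in> \<int>"
proof -
  from assms have "algebraic_int x" and "x \<in> qfield d" by (auto simp: qints_def)
  then obtain a b where ab: "a \<in> \<rat>" "b \<in> \<rat>" "x = a + b * sqd" by (auto simp: qfield_iff)
  have \<sigma>x: "\<sigma> x = a - b * sqd" using ab by (simp add: qconj_eq)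
  have trace: "x + \<sigma> x = 2 * a" and norm: "x * \<sigma> x = a^2 - real d * b^2"
    unfolding \<sigma>x unfolding ab(3) using sqd_square by (simp_all add: algebra_simps power2_eq_square)
  have "2 * a \<in> \<int> \<and> a^2 - real d * b^2 \<in> \<int>"
  proof (cases "b = 0")
    case True
    then have "a \<in> \<int>" using ab \<open>algebraic_int x\<close> rational_algebraic_int_is_int by simp
    then show ?thesis using True by simp
  next
    case False
    then show ?thesis using algebraic_int_qcoords_Ints ab \<open>algebraic_int x\<close> by simp
  qed
  then show "x + \<sigma> x \<in> \<int>" "x * \<sigma> x \<in> \<int>" unfolding trace norm by simp_all
qed

lemma qints_iff: "x \<in> qints d \<longleftrightarrow> (\<exists>P Q. integral_coords P Q \<and> x = qhalf P Q)"
proof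
  assume x: "x \<in> qints d"
  then obtain a b where ab: "a \<in> \<rat>" "b \<in> \<rat>" "x = a + b * sqd" by (auto simp: qints_def qfield_iff)
  obtain P where P: "x + \<sigma> x = of_int P" using qints_trace_norm_Ints(1)[OF x]
    by (auto elim: Ints_cases)
  obtain N where N: "x * \<sigma> x = of_int N" using qints_trace_norm_Ints(2)[OF x]
    by (auto elim: Ints_cases)
  have \<sigma>x: "\<sigma> x = a - b * sqd" using ab by (simp add: qconj_eq)
  have "of_int P = 2 * a" "of_int N = a^2 - real d * b^2"
    using P N sqd_square unfolding \<sigma>x unfolding ab(3)
      by (simp_all add: algebra_simps power2_eq_square)
  then have "real d * (2 * b)^2 = of_int (P^2 - 4 * N)"
    by (simp add: power2_eq_square algebra_simps)
  then have "2 * b \<in> \<int>" using squarefree_mult_square_Ints_imp_Ints[OF squarefree_d] ab(2) by simp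
  then obtain Q where Q: "2 * b = of_int Q" by (auto elim: Ints_cases)
  have "x = qhalf P Q" using \<open>of_int P = 2 * a\<close> Q ab(3) by (simp add: qhalf_def field_simps)
  moreover have "integral_coords P Q"
  proof -
    have "real_of_int (P^2 - int d * Q^2) = (2 * a)^2 - real d * (2 * b)^2"
      by (simp add: \<open>of_int P = 2 * a\<close> flip: Q)
    also have "\<dots> = real_of_int (4 * N)"
      using \<open>of_int N = _\<close> by (simp add: power2_eq_square algebra_simps)
    finally show ?thesis unfolding integral_coords_def of_int_eq_iff by simp
  qed
  ultimately show "\<exists>P Q. integral_coords P Q \<and> x = qhalf P Q" by blast
qed (auto intro: qhalf_in_qints)

lemma integral_coords_even_if_mod_4_ne_1:
  assumes "int d mod 4 \<noteq> 1" "integral_coords P Q"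
  shows "even P \<and> even Q"
proof -
  obtain N where N: "P^2 - int d * Q^2 = 4 * N" using assms(2) by (auto simp: integral_coords_def)
  have "even Q"
  proof (rule ccontr)
    assume "odd Q"
    then obtain j where j: "Q = 2 * j + 1" by (rule oddE)
    show False
    proof (cases "even P")
      case True
      then obtain i where "P = 2 * i" by (rule evenE)
      then have "int d = 4 * (i^2 - N - int d * (j^2 + j))"
        using N j by (simp add: algebra_simps power2_eq_square)
      then show False using squarefree_not_4_dvd[OF squarefree_d] by (metis dvd_triv_left)
    next
      case False
      then obtain i where "P = 2 * i + 1" by (rule oddE)
      then have "int d = 4 * (i^2 + i - N - int d * (j^2 + j)) + 1"
        using N j by (simp add: algebra_simps power2_eq_square)
      then have "\<exists>Y. int d = 4 * Y + 1" by blast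
      then show False using assms(1) by auto
    qed
  qed
  then obtain j where "Q = 2 * j" by (rule evenE)
  then have "P^2 = 2 * (2 * (N + int d * j^2))" using N
    by (simp add: algebra_simps power2_eq_square)
  then have "even (P^2)" by (metis dvd_triv_left)
  with \<open>even Q\<close> show ?thesis by simp
qed

lemma integral_coords_even_diff:
  assumes "integral_coords P Q"
  shows "even (P - Q)"
proof (cases "even (int d)")
  case True
  then have "int d mod 4 \<noteq> 1" by presburger
  then show ?thesis using integral_coords_even_if_mod_4_ne_1 assms by auto
next
  case False
  have "even (P^2 - int d * Q^2)"
    using assms unfolding integral_coords_def by (metis dvd_trans even_numeral)
  then show ?thesis using False by (auto simp: even_mult_iff)
qed

lemma integral_coords_if_even_diff:
  assumes "even (P - Q)" "int d mod 4 = 1 \<or> even Q"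
  shows "integral_coords P Q"
proof (cases "even Q")
  case True
  then have "even P" using assms(1) by simp
  then obtain i j where "P = 2 * i" "Q = 2 * j" using \<open>even Q\<close> by (elim evenE)
  then have "P^2 - int d * Q^2 = 4 * (i^2 - int d * j^2)"
    by (simp add: algebra_simps power2_eq_square)
  then show ?thesis by (simp add: integral_coords_def)
next
  case False
  then have "odd P" "int d mod 4 = 1" using assms by simp_all
  then obtain i j where "P = 2 * i + 1" "Q = 2 * j + 1" using \<open>odd Q\<close> by (elim oddE)
  moreover have "int d = 4 * (int d div 4) + 1"
    using div_mult_mod_eq[of "int d" 4] \<open>int d mod 4 = 1\<close> by linarith
  ultimately have "P^2 - int d * Q^2 = 4 * (i^2 + i - int d * (j^2 + j) - int d div 4)"
    by (simp add: algebra_simps power2_eq_square)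
  then show ?thesis by (simp add: integral_coords_def)
qed

lemma qints_mult:
  assumes "x \<in> qints d" "y \<in> qints d"
  shows "x * y \<in> qints d"
proof -
  obtain P Q P' Q' where PQ: "integral_coords P Q" "x = qhalf P Q"
    and PQ': "integral_coords P' Q'" "y = qhalf P' Q'"
    using assms qints_iff by blast
  obtain N where N: "P^2 - int d * Q^2 = 4 * N" using PQ(1) by (auto simp: integral_coords_def)
  obtain N' where N': "P'^2 - int d * Q'^2 = 4 * N'" using PQ'(1)
    by (auto simp: integral_coords_def)
  have "even (P - Q)" "even (P' - Q')" using PQ(1) PQ'(1)
    by (blast intro: integral_coords_even_diff)+
  moreover have "even P \<and> even Q \<and> even P' \<and> even Q'" if "even (int d)"
  proof -
    have "int d mod 4 \<noteq> 1" using that by presburger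
    then show ?thesis using integral_coords_even_if_mod_4_ne_1 PQ(1) PQ'(1) by blast
  qed
  ultimately have "even (P * P' + int d * Q * Q')" "even (P * Q' + P' * Q)"
    by (auto simp: even_mult_iff)
  then obtain X Y where X: "P * P' + int d * Q * Q' = 2 * X" and Y: "P * Q' + P' * Q = 2 * Y"
    by (elim evenE)
  have "4 * (X^2 - int d * Y^2) = (2 * X)^2 - int d * (2 * Y)^2"
    by (simp add: power2_eq_square algebra_simps)
  also have "\<dots> = (P * P' + int d * Q * Q')^2 - int d * (P * Q' + P' * Q)^2"
    by (simp only: X Y)
  also have "\<dots> = (P^2 - int d * Q^2) * (P'^2 - int d * Q'^2)"
    by (simp add: power2_eq_square algebra_simps)
  also have "\<dots> = 4 * (4 * (N * N'))" unfolding N N' by simp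
  finally have "X^2 - int d * Y^2 = 4 * (N * N')" by (simp only: mult_cancel_left) simp
  then have "integral_coords X Y" by (simp add: integral_coords_def)
  moreover have "x * y = qhalf X Y"
  proof -
    have Xr: "real_of_int X = (of_int P * of_int P' + real d * of_int Q * of_int Q') / 2"
      using arg_cong[OF X, of real_of_int] by simp
    have Yr: "real_of_int Y = (of_int P * of_int Q' + of_int P' * of_int Q) / 2"
      using arg_cong[OF Y, of real_of_int] by simp
    show ?thesis unfolding PQ(2) PQ'(2) qhalf_def Xr Yr using sqd_square by (simp add: field_simps)
  qed
  ultimately show ?thesis using qhalf_in_qints by simp
qed

lemma qunits_iff:
  "u \<in> qunits d \<longleftrightarrow> (\<exists>P Q. u = qhalf P Q \<and> (P^2 - int d * Q^2 = 4 \<or> P^2 - int d * Q^2 = -4))"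
proof
  assume "u \<in> qunits d"
  then obtain v where uv: "u \<in> qints d" "v \<in> qints d" "u * v = 1" by (auto simp: qunits_def)
  obtain P Q P' Q' where PQ: "integral_coords P Q" "u = qhalf P Q"
    and PQ': "integral_coords P' Q'" "v = qhalf P' Q'"
    using uv(1,2) qints_iff by blast
  obtain N where N: "P^2 - int d * Q^2 = 4 * N" using PQ(1) by (auto simp: integral_coords_def)
  obtain N' where N': "P'^2 - int d * Q'^2 = 4 * N'" using PQ'(1)
    by (auto simp: integral_coords_def)
  have "\<sigma> u * \<sigma> v = 1"
    using uv(3) qconj_mult[OF qhalf_qfield qhalf_qfield, of P Q P' Q'] qconj_Rats[of 1] PQ(2) PQ'(2)
    by simp
  then have "(u * \<sigma> u) * (v * \<sigma> v) = 1" using uv(3) by (simp add: algebra_simps)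
  moreover have "u * \<sigma> u = of_int N" "v * \<sigma> v = of_int N'"
    using PQ(2) PQ'(2) N N' by (simp_all add: qconj_qhalf qhalf_norm)
  ultimately have "N * N' = 1" by (metis of_int_eq_1_iff of_int_mult)
  then have "N = 1 \<or> N = -1" using zmult_eq_1_iff by blast
  then show "\<exists>P Q. u = qhalf P Q \<and> (P^2 - int d * Q^2 = 4 \<or> P^2 - int d * Q^2 = -4)"
    using PQ(2) N by (intro exI[of _ P] exI[of _ Q]) auto
next
  assume "\<exists>P Q. u = qhalf P Q \<and> (P^2 - int d * Q^2 = 4 \<or> P^2 - int d * Q^2 = -4)"
  then obtain P Q s where u: "u = qhalf P Q" and s: "P^2 - int d * Q^2 = 4 * s" "s^2 = 1"
    by (metis mult.right_neutral mult_minus1_right power2_minus power_one)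
  have "(s * P)^2 - int d * (- (s * Q))^2 = P^2 - int d * Q^2"
    using s(2) by (simp add: power_mult_distrib)
  then have "integral_coords P Q" "integral_coords (s * P) (- (s * Q))"
    using s(1) by (simp_all add: integral_coords_def)
  moreover have "qhalf (s * P) (- (s * Q)) = of_int s * qhalf P (- Q)"
    by (simp add: qhalf_def algebra_simps)
  then have "qhalf P Q * qhalf (s * P) (- (s * Q)) = of_int s * (qhalf P Q * qhalf P (- Q))"
    by simp
  then have "qhalf P Q * qhalf (s * P) (- (s * Q)) = 1"
    unfolding qhalf_norm s(1) using s(2) by (simp add: power2_eq_square flip: of_int_mult)
  ultimately show "u \<in> qunits d" unfolding u qunits_def using qhalf_in_qints by blast
qed

lemma qunits_qints: "u \<in> qunits d \<Longrightarrow> u \<in> qints d"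
  by (simp add: qunits_def)

lemma qunits_qfield: "u \<in> qunits d \<Longrightarrow> u \<in> qfield d"
  by (simp add: qunits_def qints_def)

lemma qunits_nonzero: "u \<in> qunits d \<Longrightarrow> u \<noteq> 0"
  by (auto simp: qunits_def)

lemma qunits_1: "1 \<in> qunits d"
  unfolding qunits_iff by (intro exI[of _ 2] exI[of _ 0]) (simp add: qhalf_def)

lemma qunits_mult: "u \<in> qunits d \<Longrightarrow> v \<in> qunits d \<Longrightarrow> u * v \<in> qunits d"
  unfolding qunits_def
proof (elim CollectE conjE bexE, intro CollectI conjI)
  fix u' v'
  assume "u \<in> qints d" "v \<in> qints d" "u' \<in> qints d" "v' \<in> qints d" "u * u' = 1" "v * v' = 1"
  then show "u * v \<in> qints d" "\<exists>w\<in>qints d. u * v * w = 1"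
    by (auto intro!: qints_mult bexI[of _ "u' * v'"] simp: algebra_simps)
qed

lemma qunits_inverse: "u \<in> qunits d \<Longrightarrow> inverse u \<in> qunits d"
  unfolding qunits_def
proof (elim CollectE conjE bexE, intro CollectI conjI)
  fix v assume "u \<in> qints d" "v \<in> qints d" "u * v = 1"
  moreover from this have "inverse u = v" by (simp add: inverse_unique)
  ultimately show "inverse u \<in> qints d" "\<exists>w\<in>qints d. inverse u * w = 1"
    by (auto intro!: bexI[of _ u] simp: mult.commute)
qed

lemma qunits_uminus: "u \<in> qunits d \<Longrightarrow> - u \<in> qunits d"
proof -
  have "-1 \<in> qunits d" unfolding qunits_iff
    by (intro exI[of _ "-2"] exI[of _ 0]) (simp add: qhalf_def)
  then show "u \<in> qunits d \<Longrightarrow> - u \<in> qunits d" using qunits_mult by fastforce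
qed

lemma qunits_abs: "u \<in> qunits d \<Longrightarrow> \<bar>u\<bar> \<in> qunits d"
  using qunits_uminus by (cases "0 \<le> u") auto

lemma qunits_power_int: "u \<in> qunits d \<Longrightarrow> u powi k \<in> qunits d"
proof -
  assume u: "u \<in> qunits d"
  have "v ^ n \<in> qunits d" if "v \<in> qunits d" for v n
    by (induction n) (use that qunits_1 qunits_mult in auto)
  then show ?thesis using u qunits_inverse by (auto simp: power_int_def)
qed

lemma qunits_norm:
  assumes "u \<in> qunits d"
  shows "u * \<sigma> u = 1 \<or> u * \<sigma> u = -1"
  using assms unfolding qunits_iff by (auto simp: qconj_qhalf qhalf_norm)

lemma qunits_qconj_square:
  assumes "u \<in> qunits d"
  shows "(\<sigma> u)^2 = 1 / u^2"
proof -
  have "(u * \<sigma> u)^2 = 1" using qunits_norm[OF assms] by auto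
  then show ?thesis using qunits_nonzero[OF assms] by (simp add: field_simps power_mult_distrib)
qed

lemma qunits_gt_1_coords:
  assumes "u \<in> qunits d" "1 < u"
  obtains A B where "u = qhalf A B" "0 < A" "0 < B" "of_int A < u + 1" "of_int B < u + 1"
    "A^2 - int d * B^2 = 4 \<or> A^2 - int d * B^2 = -4"
proof -
  obtain A B where u: "u = qhalf A B" and norm: "A^2 - int d * B^2 = 4 \<or> A^2 - int d * B^2 = -4"
    using assms(1) qunits_iff by blast
  have "\<bar>u * \<sigma> u\<bar> = 1" using qunits_norm[OF assms(1)] by auto
  then have "\<bar>\<sigma> u\<bar> = 1 / u" using assms(2) by (simp add: abs_mult field_simps)
  then have "\<bar>\<sigma> u\<bar> < 1" using assms(2) by simp
  moreover have "of_int A = u + \<sigma> u" "of_int B * sqd = u - \<sigma> u"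
    unfolding u qconj_qhalf by (simp_all add: qhalf_def field_simps)
  ultimately have "0 < real_of_int A" "0 < of_int B * sqd"
    "of_int A < u + 1" "of_int B * sqd < u + 1"
    using assms(2) by (auto simp: abs_less_iff)
  moreover from this(2) have "0 < B" using sqd_gt_1 by (simp add: zero_less_mult_iff)
  moreover from this have "of_int B * 1 \<le> of_int B * sqd"
    using sqd_gt_1 by (intro mult_left_mono) simp_all
  ultimately have "0 < A" "0 < B" "of_int A < u + 1" "of_int B < u + 1" by (simp_all, linarith)
  with u norm show thesis using that by blast
qed

lemma exists_fundamental_unit:
  assumes "\<exists>u\<in>qunits d. 1 < u"
  obtains \<epsilon> where "\<epsilon> \<in> qunits d" "1 < \<epsilon>" "\<And>u. u \<in> qunits d \<Longrightarrow> 1 < u \<Longrightarrow> \<epsilon> \<le> u"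
proof -
  obtain u0 where u0: "u0 \<in> qunits d" "1 < u0" using assms by blast
  define T where "T = {u \<in> qunits d. 1 < u \<and> u \<le> u0}"
  define K where "K = \<lceil>u0\<rceil>"
  have "T \<subseteq> (\<lambda>(A, B). qhalf A B) ` ({0..K} \<times> {0..K})"
  proof
    fix u assume "u \<in> T"
    then have u: "u \<in> qunits d" "1 < u" "u \<le> u0" by (auto simp: T_def)
    then obtain A B where "u = qhalf A B" "0 < A" "0 < B" "of_int A < u + 1" "of_int B < u + 1"
      using qunits_gt_1_coords by metis
    moreover have "u0 \<le> of_int K" unfolding K_def by simp
    ultimately have "(A, B) \<in> {0..K} \<times> {0..K}" "u = qhalf A B" using u(3) by auto
    then show "u \<in> (\<lambda>(A, B). qhalf A B) ` ({0..K} \<times> {0..K})" by force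
  qed
  then have "finite T" by (rule finite_subset) auto
  moreover have "u0 \<in> T" using u0 by (simp add: T_def)
  ultimately have "Min T \<in> T" "\<And>u. u \<in> T \<Longrightarrow> Min T \<le> u" by (auto intro: Min_in)
  show thesis
  proof (rule that)
    show "Min T \<in> qunits d" "1 < Min T" using \<open>Min T \<in> T\<close> by (auto simp: T_def)
    fix u assume "u \<in> qunits d" "1 < u"
    then show "Min T \<le> u"
      using \<open>Min T \<in> T\<close> \<open>\<And>u. u \<in> T \<Longrightarrow> Min T \<le> u\<close> by (cases "u \<le> u0") (auto simp: T_def)
  qed
qed

lemma qtrace_nonneg:
  assumes "a \<in> qtotpos d" "x \<in> qfield d"
  shows "0 \<le> qtrace d (a * x^2)"
  using assms qtrace_mult_square by (simp add: qtotpos_def)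

lemma qmu_le_qtrace:
  assumes "a \<in> qtotpos d" "x \<in> qints d" "x \<noteq> 0"
  shows "qmu d a \<le> qtrace d (a * x^2)"
  unfolding qmu_def using assms
  by (intro cInf_lower bdd_belowI[of _ 0]) (auto intro: qtrace_nonneg simp: qints_def)

lemma qtotpos_mult_unit_square:
  assumes "a \<in> qtotpos d" "u \<in> qunits d"
  shows "a * u^2 \<in> qtotpos d"
proof -
  have "a \<in> qfield d" "0 < a" "0 < \<sigma> a" "u \<in> qfield d" "u \<noteq> 0"
    using assms by (auto simp: qtotpos_def qunits_qfield qunits_nonzero)
  moreover have "\<sigma> (a * u^2) = \<sigma> a / u^2"
    using calculation qunits_qconj_square[OF assms(2)]
    by (simp add: power2_eq_square qconj_mult qfield_mult)
  moreover have "a * u^2 \<in> qfield d" using calculation by (simp add: power2_eq_square qfield_mult)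
  ultimately show ?thesis by (simp add: qtotpos_def)
qed

section \<open>Unit reducibility as a chord condition\<close>

lemma qtrace_ge_min_above_chord:
  assumes "b \<in> qtotpos d" "\<epsilon> \<in> qunits d" "1 < \<epsilon>" "y \<in> qfield d" "1 \<le> y^2" "y^2 \<le> \<epsilon>^2"
    and "1 + \<epsilon>^2 \<le> y^2 + \<epsilon>^2 * (\<sigma> y)^2"
  shows "min (qtrace d b) (qtrace d (b * \<epsilon>^2)) \<le> qtrace d (b * y^2)"
proof -
  have b: "b \<in> qfield d" "0 < b" "0 < \<sigma> b" using assms(1) by (auto simp: qtotpos_def)
  have "qtrace d b = b + \<sigma> b" by (simp add: qtrace_def)
  moreover have "qtrace d (b * \<epsilon>^2) = b * \<epsilon>^2 + \<sigma> b / \<epsilon>^2"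
    using qtrace_mult_square[OF b(1) qunits_qfield[OF assms(2)]] qunits_qconj_square[OF assms(2)]
    by simp
  moreover have "qtrace d (b * y^2) = b * y^2 + \<sigma> b * (\<sigma> y)^2"
    using qtrace_mult_square[OF b(1) assms(4)] .
  moreover have "1 < \<epsilon>^2" using assms(3) by (simp add: one_less_power)
  ultimately show ?thesis
    using linear_ge_min_above_chord[of b "\<sigma> b" "\<epsilon>^2" "y^2" "(\<sigma> y)^2"] b assms(5-7) by simp
qed

lemma exists_unit_trace_le:
  assumes "\<epsilon> \<in> qunits d" "1 < \<epsilon>"
    and above_chord: "\<And>y. y \<in> qints d \<Longrightarrow> y \<noteq> 0 \<Longrightarrow> 1 + \<epsilon>^2 \<le> y^2 + \<epsilon>^2 * (\<sigma> y)^2"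
    and "a \<in> qtotpos d" "x \<in> qints d" "x \<noteq> 0"
  shows "\<exists>u\<in>qunits d. qtrace d (a * u^2) \<le> qtrace d (a * x^2)"
proof -
  obtain k where k: "(\<epsilon>^2) powi k \<le> x^2" "x^2 < (\<epsilon>^2) powi (k + 1)"
    using ex_power_int_bracket[of "\<epsilon>^2" "x^2"] assms(2,6) by (auto simp: one_less_power)
  define u where "u = \<epsilon> powi k"
  have u: "u \<in> qunits d" "u \<noteq> 0" using assms(1) qunits_power_int qunits_nonzero
    by (auto simp: u_def)
  have u2: "u^2 = (\<epsilon>^2) powi k" by (simp add: u_def power2_eq_square power_int_mult_distrib)
  define y where "y = x * inverse u"
  have x_eq: "x = u * y" using u(2) by (simp add: y_def)
  have "y \<in> qints d"
    unfolding y_def using qints_mult[OF assms(5) qunits_qints[OF qunits_inverse[OF u(1)]]] .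
  moreover have "y \<noteq> 0" using assms(6) u(2) by (simp add: y_def)
  ultimately have "1 + \<epsilon>^2 \<le> y^2 + \<epsilon>^2 * (\<sigma> y)^2" by (rule above_chord)
  moreover have "u^2 * 1 \<le> u^2 * y^2" "u^2 * y^2 \<le> u^2 * \<epsilon>^2"
    using k u2 assms(2) unfolding x_eq
      by (simp_all add: power_int_add_1 power_mult_distrib mult.commute)
  then have "1 \<le> y^2" "y^2 \<le> \<epsilon>^2" using u(2) by simp_all
  moreover have "a * u^2 \<in> qtotpos d" using assms(4) u(1) by (rule qtotpos_mult_unit_square)
  ultimately have "min (qtrace d (a * u^2)) (qtrace d (a * u^2 * \<epsilon>^2)) \<le> qtrace d (a * u^2 * y^2)"
    using qtrace_ge_min_above_chord assms(1,2) \<open>y \<in> qints d\<close> by (simp add: qints_def)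
  moreover have "a * u^2 * \<epsilon>^2 = a * (u * \<epsilon>)^2" "a * u^2 * y^2 = a * x^2"
    by (simp_all add: x_eq power_mult_distrib)
  moreover have "u * \<epsilon> \<in> qunits d" using u(1) assms(1) by (rule qunits_mult)
  ultimately show ?thesis using u(1) by (metis min_le_iff_disj)
qed

lemma unit_reducibleI:
  assumes "\<epsilon> \<in> qunits d" "1 < \<epsilon>"
    and "\<And>y. y \<in> qints d \<Longrightarrow> y \<noteq> 0 \<Longrightarrow> 1 + \<epsilon>^2 \<le> y^2 + \<epsilon>^2 * (\<sigma> y)^2"
  shows "unit_reducible d"
  unfolding unit_reducible_def
proof
  fix a assume a: "a \<in> qtotpos d"
  define f where "f x = qtrace d (a * x^2)" for x
  have "Inf (f ` (qints d - {0})) = Inf (f ` qunits d)"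
  proof (rule cInf_eq_if_dominated)
    show "f ` qunits d \<subseteq> f ` (qints d - {0})" using qunits_qints qunits_nonzero by blast
    show "f ` qunits d \<noteq> {}" using qunits_1 by blast
    show "bdd_below (f ` (qints d - {0}))"
      using qtrace_nonneg[OF a] by (intro bdd_belowI[of _ 0]) (auto simp: f_def qints_def)
    show "\<exists>v\<in>f ` qunits d. v \<le> t" if "t \<in> f ` (qints d - {0})" for t
      using that exists_unit_trace_le[OF assms a] by (auto simp: f_def)
  qed
  then show "qmu d a = Inf ((\<lambda>u. qtrace d (a * u^2)) ` qunits d)" by (simp add: qmu_def f_def)
qed

text \<open>The witness is \<open>c = 1 / \<epsilon>\<close> if \<open>\<epsilon> \<sigma>(\<epsilon>) = 1\<close>, and \<open>c = sqrt d / \<epsilon>\<close> if \<open>\<epsilon> \<sigma>(\<epsilon>) = -1\<close>.\<close>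
lemma exists_qtotpos_qconj_eq:
  assumes "\<epsilon> \<in> qunits d" "1 < \<epsilon>"
  shows "\<exists>c\<in>qtotpos d. \<sigma> c = \<epsilon>^2 * c"
proof -
  obtain A B where \<epsilon>: "\<epsilon> = qhalf A B"
    and norm: "A^2 - int d * B^2 = 4 \<or> A^2 - int d * B^2 = -4"
    using assms(1) qunits_iff by blast
  from norm show ?thesis
  proof
    assume norm_pos: "A^2 - int d * B^2 = 4"
    have "\<epsilon> * qhalf A (- B) = 1" unfolding \<epsilon> qhalf_norm norm_pos by simp
    then have c: "qhalf A (- B) = inverse \<epsilon>" by (simp add: inverse_unique)
    have "\<sigma> (qhalf A (- B)) = \<epsilon>" by (simp add: \<epsilon> qconj_qhalf)
    also have "\<dots> = \<epsilon>^2 * qhalf A (- B)" using assms(2) by (simp add: c power2_eq_square)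
    finally have "0 < qhalf A (- B)" "\<sigma> (qhalf A (- B)) = \<epsilon>^2 * qhalf A (- B)"
      using assms(2) by (simp_all add: c)
    then show ?thesis using assms(2) qhalf_qfield
      by (intro bexI[of _ "qhalf A (- B)"]) (auto simp: qtotpos_def)
  next
    assume "A^2 - int d * B^2 = -4"
    then have "real_of_int (A^2 - int d * B^2) = -4" by (simp only: of_int_eq_iff)
    then have norm_neg: "real d * (of_int B)^2 - (of_int A)^2 = 4" by simp
    have "\<epsilon> * qhalf (int d * B) (- A) = sqd * (real d * (of_int B)^2 - (of_int A)^2) / 4"
      unfolding \<epsilon> qhalf_def using sqd_square by (simp add: field_simps power2_eq_square)
    then have c: "qhalf (int d * B) (- A) = sqd * inverse \<epsilon>"
      unfolding norm_neg using assms(2) by (simp add: field_simps)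
    have "\<sigma> (qhalf (int d * B) (- A)) = sqd * \<epsilon>"
      unfolding qconj_qhalf unfolding \<epsilon> qhalf_def using sqd_square by (simp add: field_simps)
    also have "\<dots> = \<epsilon>^2 * qhalf (int d * B) (- A)" using assms(2) by (simp add: c power2_eq_square)
    finally have "0 < qhalf (int d * B) (- A)"
      "\<sigma> (qhalf (int d * B) (- A)) = \<epsilon>^2 * qhalf (int d * B) (- A)"
      using assms(2) d_gt_1 by (simp_all add: c)
    then show ?thesis using assms(2) qhalf_qfield
      by (intro bexI[of _ "qhalf (int d * B) (- A)"]) (auto simp: qtotpos_def)
  qed
qed

lemma fundamental_unit_above_chord:
  assumes "\<epsilon> \<in> qunits d" "1 < \<epsilon>" "\<And>v. v \<in> qunits d \<Longrightarrow> 1 < v \<Longrightarrow> \<epsilon> \<le> v" "u \<in> qunits d"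
  shows "1 + \<epsilon>^2 \<le> u^2 + \<epsilon>^2 * (\<sigma> u)^2"
proof -
  have "u^2 \<le> 1 \<or> \<epsilon>^2 \<le> u^2"
  proof (rule ccontr)
    assume "\<not> ?thesis"
    then have "1 < \<bar>u\<bar>" "\<bar>u\<bar>^2 < \<epsilon>^2" by (simp_all add: abs_square_le_1 not_le)
    moreover from this(2) have "\<bar>u\<bar> < \<epsilon>"
      by (rule power_less_imp_less_base) (use assms(2) in simp)
    ultimately show False using assms(3)[OF qunits_abs[OF assms(4)]] by simp
  qed
  moreover have "1 \<le> \<epsilon>^2" using assms(2) by simp
  ultimately have "0 \<le> (u^2 - 1) * (u^2 - \<epsilon>^2)"
    by (auto intro: mult_nonneg_nonneg mult_nonpos_nonpos)
  moreover have "0 < u^2" using qunits_nonzero[OF assms(4)] by simp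
  moreover have "u^2 + \<epsilon>^2 * (\<sigma> u)^2 - (1 + \<epsilon>^2) = (u^2 - 1) * (u^2 - \<epsilon>^2) / u^2"
    using calculation(2) qunits_qconj_square[OF assms(4)] by (simp add: field_simps)
  ultimately show ?thesis by (metis diff_ge_0_iff_ge divide_nonneg_pos)
qed

lemma unit_reducibleD:
  assumes "unit_reducible d"
    and "\<epsilon> \<in> qunits d" "1 < \<epsilon>" "\<And>v. v \<in> qunits d \<Longrightarrow> 1 < v \<Longrightarrow> \<epsilon> \<le> v"
    and "y \<in> qints d" "y \<noteq> 0"
  shows "1 + \<epsilon>^2 \<le> y^2 + \<epsilon>^2 * (\<sigma> y)^2"
proof -
  obtain c where c: "c \<in> qtotpos d" "\<sigma> c = \<epsilon>^2 * c"
    using exists_qtotpos_qconj_eq assms(2,3) by blast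
  then have "c \<in> qfield d" "0 < c" by (simp_all add: qtotpos_def)
  have trace: "qtrace d (c * z^2) = c * (z^2 + \<epsilon>^2 * (\<sigma> z)^2)" if "z \<in> qfield d" for z
    using qtrace_mult_square[OF \<open>c \<in> qfield d\<close> that] c(2) by (simp add: algebra_simps)
  have "c * (1 + \<epsilon>^2) \<le> Inf ((\<lambda>u. qtrace d (c * u^2)) ` qunits d)"
  proof (rule cInf_greatest)
    fix t assume "t \<in> (\<lambda>u. qtrace d (c * u^2)) ` qunits d"
    then obtain u where "u \<in> qunits d" "t = c * (u^2 + \<epsilon>^2 * (\<sigma> u)^2)"
      using trace qunits_qfield by blast
    then show "c * (1 + \<epsilon>^2) \<le> t"
      using fundamental_unit_above_chord[OF assms(2-4)] \<open>0 < c\<close> by simp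
  qed (use qunits_1 in blast)
  also have "\<dots> = qmu d c" using assms(1) c(1) by (simp add: unit_reducible_def)
  also have "\<dots> \<le> qtrace d (c * y^2)" using c(1) assms(5,6) by (rule qmu_le_qtrace)
  also have "\<dots> = c * (y^2 + \<epsilon>^2 * (\<sigma> y)^2)" using assms(5) trace by (simp add: qints_def)
  finally show ?thesis using \<open>0 < c\<close> by simp
qed

lemma qunits_square_eq_1_if_no_unit_gt_1:
  assumes "\<forall>v\<in>qunits d. \<not> 1 < v" "u \<in> qunits d"
  shows "u^2 = 1"
proof -
  have "\<bar>u\<bar> \<le> 1" "inverse \<bar>u\<bar> \<le> 1"
    using assms qunits_abs qunits_inverse by (auto simp: not_less)
  then have "\<bar>u\<bar> = 1" using qunits_nonzero[OF assms(2)] by (simp add: field_simps)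
  then show ?thesis by (metis power2_abs power_one)
qed

lemma exists_qtotpos_less_mult_qconj:
  assumes "0 < r"
  shows "\<exists>a\<in>qtotpos d. a < r * \<sigma> a"
proof -
  obtain \<rho> where \<rho>: "\<rho> \<in> \<rat>" "sqd < \<rho>" "\<rho> < sqd + r * sqd"
    using Rats_dense_in_real[of sqd "sqd + r * sqd"] assms sqd_gt_1 by auto
  define a where "a = \<rho> + (- 1) * sqd"
  have "a \<in> qfield d" unfolding a_def qfield_iff using \<rho>(1)
    by (intro bexI[of _ \<rho>] bexI[of _ "-1"]) auto
  moreover have "\<sigma> a = \<rho> + sqd" unfolding a_def using \<rho>(1) by (subst qconj_eq) auto
  moreover have "0 < a" "0 < \<sigma> a" using \<rho>(2) sqd_gt_1 \<open>\<sigma> a = _\<close> unfolding a_def by linarith+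
  moreover have "a < r * \<sigma> a"
  proof -
    have "0 < \<rho>" using \<rho>(2) sqd_gt_1 by linarith
    then have "0 < r * \<rho>" using assms by simp
    moreover have "r * \<sigma> a = r * \<rho> + r * sqd" using \<open>\<sigma> a = _\<close> by (simp add: algebra_simps)
    ultimately show ?thesis using \<rho>(3) unfolding a_def by linarith
  qed
  ultimately show ?thesis by (auto simp: qtotpos_def)
qed

text \<open>For \<open>x = \<lfloor>sqrt d\<rfloor> + sqrt d\<close> one has \<open>\<bar>\<sigma> x\<bar> < 1 < x\<close>, so \<open>Tr (a x\<^sup>2) < Tr a\<close> as soon as
  the totally positive \<open>a\<close> is small enough compared with its conjugate.\<close>
lemma exists_qtotpos_trace_less:
  "\<exists>a\<in>qtotpos d. \<exists>x\<in>qints d. x \<noteq> 0 \<and> qtrace d (a * x^2) < qtrace d a"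
proof -
  define n where "n = \<lfloor>sqd\<rfloor>"
  have "of_int n \<noteq> sqd" using sqrt_squarefree_irrational[OF squarefree_d d_gt_1]
    by (metis Rats_of_int)
  then have n: "of_int n < sqd" "sqd < of_int n + 1" "1 \<le> n"
    using sqd_gt_1 unfolding n_def by (auto simp: less_le) linarith
  define x where "x = qhalf (2 * n) 2"
  have x: "x = of_int n + sqd" "\<sigma> x = of_int n - sqd"
    unfolding x_def qconj_qhalf by (simp_all add: qhalf_def)
  have "integral_coords (2 * n) 2" by (simp add: integral_coords_def power2_eq_square algebra_simps)
  then have "x \<in> qints d" unfolding x_def by (rule qhalf_in_qints)
  have "0 < 1 - (\<sigma> x)^2" using n x by (simp add: abs_square_less_1)
  have "1 < x" using x(1) n(3) sqd_gt_1 by linarith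
  then have "0 < x^2 - 1" by (simp add: one_less_power)
  with \<open>0 < 1 - (\<sigma> x)^2\<close> obtain a where a: "a \<in> qtotpos d" "a < (1 - (\<sigma> x)^2) / (x^2 - 1) * \<sigma> a"
    using exists_qtotpos_less_mult_qconj[of "(1 - (\<sigma> x)^2) / (x^2 - 1)"] by auto
  then have "a * (x^2 - 1) < \<sigma> a * (1 - (\<sigma> x)^2)"
    using \<open>0 < x^2 - 1\<close> by (simp add: field_simps)
  then have "qtrace d (a * x^2) < qtrace d a"
    using qtrace_mult_square a(1) \<open>x \<in> qints d\<close>
    by (simp add: qints_def qtotpos_def qtrace_def algebra_simps)
  moreover have "x \<noteq> 0" using \<open>1 < x\<close> by simp
  ultimately show ?thesis using a(1) \<open>x \<in> qints d\<close> by blast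
qed

lemma unit_reducible_imp_unit_gt_1:
  assumes "unit_reducible d"
  shows "\<exists>u\<in>qunits d. 1 < u"
proof (rule ccontr)
  assume "\<not> ?thesis"
  then have units: "u^2 = 1" if "u \<in> qunits d" for u
    using qunits_square_eq_1_if_no_unit_gt_1 that by blast
  obtain a x where a: "a \<in> qtotpos d" and x: "x \<in> qints d" "x \<noteq> 0" "qtrace d (a * x^2) < qtrace d a"
    using exists_qtotpos_trace_less by blast
  have "(\<lambda>u. qtrace d (a * u^2)) ` qunits d = {qtrace d a}" using units qunits_1 by force
  then have "qmu d a = qtrace d a" using assms a by (simp add: unit_reducible_def)
  moreover have "qmu d a \<le> qtrace d (a * x^2)" using a x(1,2) by (rule qmu_le_qtrace)
  ultimately show False using x(3) by simp
qed

section \<open>The chord condition for integral coordinates\<close>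

text \<open>If \<open>\<epsilon> \<sigma>(\<epsilon>) = 1\<close>, the excess is \<open>\<epsilon> (Tr (\<sigma>(\<epsilon>) y\<^sup>2) - Tr \<epsilon>)\<close>; if \<open>\<epsilon> \<sigma>(\<epsilon>) = -1\<close>, it
  is \<open>\<epsilon> (\<epsilon> \<sigma>(y)\<^sup>2 - \<sigma>(\<epsilon>) y\<^sup>2 - (\<epsilon> - \<sigma>(\<epsilon>)))\<close>, a rational multiple of \<open>\<epsilon> sqrt d\<close>.\<close>
lemma chord_excess_norm_pos:
  assumes "A^2 - int d * B^2 = 4"
  shows "(qhalf P Q)^2 + (qhalf A B)^2 * (\<sigma> (qhalf P Q))^2 - (1 + (qhalf A B)^2)
    = qhalf A B / 4 * of_int (A * (P^2 + int d * Q^2) - 2 * B * int d * P * Q - 4 * A)"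
proof -
  have "qhalf A B * qhalf A (- B) = 1" unfolding qhalf_norm assms by simp
  then have "qhalf A B \<noteq> 0" and inv: "qhalf A (- B) = inverse (qhalf A B)"
    by (auto simp: inverse_unique)
  have "(qhalf P Q)^2 + (qhalf A B)^2 * (qhalf P (- Q))^2 - (1 + (qhalf A B)^2)
      = qhalf A B * (qhalf A (- B) * (qhalf P Q)^2 + qhalf A B * (qhalf P (- Q))^2
          - qhalf A (- B) - qhalf A B)"
    using \<open>qhalf A B \<noteq> 0\<close> unfolding inv by (simp add: field_simps power2_eq_square)
  also have "qhalf A (- B) * (qhalf P Q)^2 + qhalf A B * (qhalf P (- Q))^2
      - qhalf A (- B) - qhalf A B
      = of_int (A * (P^2 + int d * Q^2) - 2 * B * int d * P * Q - 4 * A) / 4"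
    unfolding qhalf_def using sqd_square by (simp add: field_simps power2_eq_square)
  finally show ?thesis unfolding qconj_qhalf by simp
qed

lemma chord_excess_norm_neg:
  assumes "A^2 - int d * B^2 = -4"
  shows "(qhalf P Q)^2 + (qhalf A B)^2 * (\<sigma> (qhalf P Q))^2 - (1 + (qhalf A B)^2)
    = qhalf A B * sqd / 4 * of_int (B * (P^2 + int d * Q^2) - 2 * A * P * Q - 4 * B)"
proof -
  have h: "qhalf A B * - qhalf A (- B) = 1" unfolding mult_minus_right qhalf_norm assms by simp
  then have "qhalf A B \<noteq> 0" by auto
  from inverse_unique[OF h] have inv: "qhalf A (- B) = - inverse (qhalf A B)" by simp
  have "(qhalf P Q)^2 + (qhalf A B)^2 * (qhalf P (- Q))^2 - (1 + (qhalf A B)^2)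
      = qhalf A B * (- qhalf A (- B) * (qhalf P Q)^2 + qhalf A B * (qhalf P (- Q))^2
          + qhalf A (- B) - qhalf A B)"
    using \<open>qhalf A B \<noteq> 0\<close> unfolding inv by (simp add: field_simps power2_eq_square)
  also have "- qhalf A (- B) * (qhalf P Q)^2 + qhalf A B * (qhalf P (- Q))^2
      + qhalf A (- B) - qhalf A B
      = sqd * of_int (B * (P^2 + int d * Q^2) - 2 * A * P * Q - 4 * B) / 4"
    unfolding qhalf_def using sqd_square by (simp add: field_simps power2_eq_square)
  finally show ?thesis unfolding qconj_qhalf by simp
qed

lemma above_chord_iff_norm_pos:
  assumes "A^2 - int d * B^2 = 4" "0 < A" "0 < B"
  shows "1 + (qhalf A B)^2 \<le> (qhalf P Q)^2 + (qhalf A B)^2 * (\<sigma> (qhalf P Q))^2 \<longleftrightarrow>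
    4 * A \<le> A * (P^2 + int d * Q^2) - 2 * B * int d * P * Q"
proof -
  have "0 < qhalf A B / 4" using qhalf_gt_1[OF assms(2,3)] by simp
  have "1 + (qhalf A B)^2 \<le> (qhalf P Q)^2 + (qhalf A B)^2 * (\<sigma> (qhalf P Q))^2 \<longleftrightarrow>
      0 \<le> (qhalf P Q)^2 + (qhalf A B)^2 * (\<sigma> (qhalf P Q))^2 - (1 + (qhalf A B)^2)" by simp
  also have "\<dots> \<longleftrightarrow>
      0 \<le> qhalf A B / 4 * of_int (A * (P^2 + int d * Q^2) - 2 * B * int d * P * Q - 4 * A)"
    by (simp only: chord_excess_norm_pos[OF assms(1)])
  also have "\<dots> \<longleftrightarrow> 4 * A \<le> A * (P^2 + int d * Q^2) - 2 * B * int d * P * Q"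
    using \<open>0 < qhalf A B / 4\<close> by (simp only: pos_mult_of_int_nonneg_iff) simp
  finally show ?thesis .
qed

lemma above_chord_iff_norm_neg:
  assumes "A^2 - int d * B^2 = -4" "0 < A" "0 < B"
  shows "1 + (qhalf A B)^2 \<le> (qhalf P Q)^2 + (qhalf A B)^2 * (\<sigma> (qhalf P Q))^2 \<longleftrightarrow>
    4 * B \<le> B * (P^2 + int d * Q^2) - 2 * A * P * Q"
proof -
  have "0 < qhalf A B * sqd / 4" using qhalf_gt_1[OF assms(2,3)] sqd_gt_1 by simp
  have "1 + (qhalf A B)^2 \<le> (qhalf P Q)^2 + (qhalf A B)^2 * (\<sigma> (qhalf P Q))^2 \<longleftrightarrow>
      0 \<le> (qhalf P Q)^2 + (qhalf A B)^2 * (\<sigma> (qhalf P Q))^2 - (1 + (qhalf A B)^2)" by simp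
  also have "\<dots> \<longleftrightarrow>
      0 \<le> qhalf A B * sqd / 4 * of_int (B * (P^2 + int d * Q^2) - 2 * A * P * Q - 4 * B)"
    by (simp only: chord_excess_norm_neg[OF assms(1)])
  also have "\<dots> \<longleftrightarrow> 4 * B \<le> B * (P^2 + int d * Q^2) - 2 * A * P * Q"
    using \<open>0 < qhalf A B * sqd / 4\<close> by (simp only: pos_mult_of_int_nonneg_iff) simp
  finally show ?thesis .
qed

lemma unit_reducible_if_norm_pos_form_ge:
  assumes "A^2 - int d * B^2 = 4" "0 < A" "0 < B"
    and "\<And>P Q. integral_coords P Q \<Longrightarrow> P \<noteq> 0 \<or> Q \<noteq> 0 \<Longrightarrow>
      4 * A \<le> A * (P^2 + int d * Q^2) - 2 * B * int d * P * Q"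
  shows "unit_reducible d"
proof (rule unit_reducibleI)
  show "qhalf A B \<in> qunits d" using assms(1) qunits_iff by blast
  show "1 < qhalf A B" using assms(2,3) by (rule qhalf_gt_1)
  fix y assume "y \<in> qints d" "y \<noteq> 0"
  then obtain P Q where "integral_coords P Q" "y = qhalf P Q" "P \<noteq> 0 \<or> Q \<noteq> 0"
    using qints_iff qhalf_eq_0_iff by metis
  then show "1 + (qhalf A B)^2 \<le> y^2 + (qhalf A B)^2 * (\<sigma> y)^2"
    using above_chord_iff_norm_pos[OF assms(1-3)] assms(4) by simp
qed

lemma unit_reducible_if_norm_neg_form_ge:
  assumes "A^2 - int d * B^2 = -4" "0 < A" "0 < B"
    and "\<And>P Q. integral_coords P Q \<Longrightarrow> P \<noteq> 0 \<or> Q \<noteq> 0 \<Longrightarrow>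
      4 * B \<le> B * (P^2 + int d * Q^2) - 2 * A * P * Q"
  shows "unit_reducible d"
proof (rule unit_reducibleI)
  show "qhalf A B \<in> qunits d" using assms(1) qunits_iff by blast
  show "1 < qhalf A B" using assms(2,3) by (rule qhalf_gt_1)
  fix y assume "y \<in> qints d" "y \<noteq> 0"
  then obtain P Q where "integral_coords P Q" "y = qhalf P Q" "P \<noteq> 0 \<or> Q \<noteq> 0"
    using qints_iff qhalf_eq_0_iff by metis
  then show "1 + (qhalf A B)^2 \<le> y^2 + (qhalf A B)^2 * (\<sigma> y)^2"
    using above_chord_iff_norm_neg[OF assms(1-3)] assms(4) by simp
qed

lemma unit_reducible_if_sq_plus_1:
  fixes m :: nat
  assumes "odd m" "int d = int m ^ 2 + 1"
  shows "unit_reducible d"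
proof (rule unit_reducible_if_norm_neg_form_ge)
  show "(2 * int m)^2 - int d * 2^2 = -4" using assms(2)
    by (simp add: power2_eq_square algebra_simps)
  show "0 < 2 * int m" using odd_pos[OF assms(1)] by simp
  show "(0::int) < 2" by simp
  have "int d mod 4 \<noteq> 1"
  proof -
    obtain b where "m = 2 * b + 1" using assms(1) by (rule oddE)
    then have "int d = 4 * (int b ^ 2 + int b) + 2" using assms(2)
      by (simp add: power2_eq_square algebra_simps)
    then have "\<exists>X. int d = 4 * X + 2" by blast
    then show ?thesis by presburger
  qed
  fix P Q assume PQ: "integral_coords P Q" "P \<noteq> 0 \<or> Q \<noteq> 0"
  then have "even P" "even Q" using integral_coords_even_if_mod_4_ne_1[OF \<open>int d mod 4 \<noteq> 1\<close>] by auto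
  then have "4 \<le> P^2 + int d * Q^2 - 2 * int m * P * Q" using sq_plus_1_form_ge[OF assms(2)] PQ(2)
    by blast
  then show "4 * 2 \<le> 2 * (P^2 + int d * Q^2) - 2 * (2 * int m) * P * Q" by (simp add: mult.assoc)
qed

lemma unit_reducible_if_sq_minus_1:
  fixes m :: nat
  assumes "even m" "int d = int m ^ 2 - 1"
  shows "unit_reducible d"
proof (rule unit_reducible_if_norm_pos_form_ge)
  have "2 \<le> m"
  proof (rule ccontr)
    assume "\<not> 2 \<le> m"
    then have "m = 0" using assms(1) by presburger
    then show False using assms(2) d_gt_1 by simp
  qed
  then show "(2 * int m)^2 - int d * 2^2 = 4" "0 < 2 * int m" "(0::int) < 2"
    using assms by (auto simp: power2_eq_square algebra_simps)
  have "int d mod 4 \<noteq> 1"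
  proof -
    obtain b where "m = 2 * b" using assms(1) by (rule evenE)
    then have "int d = 4 * int b ^ 2 - 1" using assms(2)
      by (simp add: power2_eq_square algebra_simps)
    then have "\<exists>X. int d = 4 * X - 1" by blast
    then show ?thesis by presburger
  qed
  fix P Q assume "integral_coords P Q" "P \<noteq> 0 \<or> Q \<noteq> 0"
  moreover obtain p q where "P = 2 * p" "Q = 2 * q"
    using integral_coords_even_if_mod_4_ne_1[OF \<open>int d mod 4 \<noteq> 1\<close> \<open>integral_coords P Q\<close>]
    by (auto elim!: evenE)
  moreover have "2 \<le> int m" using \<open>2 \<le> m\<close> by simp
  ultimately show "4 * (2 * int m) \<le> 2 * int m * (P^2 + int d * Q^2) - 2 * 2 * int d * P * Q"
    using sq_minus_1_form_ge[OF assms(2), of p q] by (simp add: power2_eq_square algebra_simps)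
qed

lemma unit_reducible_if_sq_plus_4:
  fixes m :: nat
  assumes "odd m" "int d = int m ^ 2 + 4"
  shows "unit_reducible d"
proof (rule unit_reducible_if_norm_neg_form_ge)
  show "int m ^ 2 - int d * 1^2 = -4" "0 < int m" "(0::int) < 1"
    using assms by (simp_all add: odd_pos)
  fix P Q assume "integral_coords P Q" "P \<noteq> 0 \<or> Q \<noteq> 0"
  then show "4 * 1 \<le> 1 * (P^2 + int d * Q^2) - 2 * int m * P * Q"
    using sq_plus_4_form_ge[OF assms(2)] by (simp add: integral_coords_def)
qed

lemma unit_reducible_if_sq_minus_4:
  fixes m :: nat
  assumes "odd m" "3 < m" "int d = int m ^ 2 - 4"
  shows "unit_reducible d"
proof (rule unit_reducible_if_norm_pos_form_ge)
  show "int m ^ 2 - int d * 1^2 = 4" "0 < int m" "(0::int) < 1" using assms by simp_all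
  have "5 \<le> int m" using assms(1,2) by presburger
  fix P Q assume "integral_coords P Q" "P \<noteq> 0 \<or> Q \<noteq> 0"
  then show "4 * int m \<le> int m * (P^2 + int d * Q^2) - 2 * 1 * int d * P * Q"
    using sq_minus_4_form_ge[OF assms(3) _ \<open>5 \<le> int m\<close>] assms(1) integral_coords_even_diff by simp
qed

text \<open>Otherwise \<open>y = (P + Q sqrt d)/2\<close>, with \<open>Q = 2\<close> if \<open>B \<ge> 3\<close> and \<open>Q = 1\<close> if \<open>B = 2\<close>, and
  \<open>P \<equiv> Q (mod 2)\<close> nearest to \<open>B d Q / A\<close>, resp. \<open>A Q / B\<close>, is a nonzero integer below the chord.\<close>
lemma unit_reducible_fundamental_unit_coeff:
  assumes "unit_reducible d" "qhalf A B \<in> qunits d" "1 < qhalf A B"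
    and "\<And>v. v \<in> qunits d \<Longrightarrow> 1 < v \<Longrightarrow> qhalf A B \<le> v"
    and "0 < A" "0 < B" "A^2 - int d * B^2 = 4 \<or> A^2 - int d * B^2 = -4"
  shows "B = 1 \<or> (B = 2 \<and> int d mod 4 \<noteq> 1)"
proof (rule ccontr)
  assume contra: "\<not> (B = 1 \<or> (B = 2 \<and> int d mod 4 \<noteq> 1))"
  define Q :: int where "Q = (if 3 \<le> B then 2 else 1)"
  have "3 \<le> B \<or> (B = 2 \<and> int d mod 4 = 1)" using contra assms(6) by auto
  moreover have "9 \<le> B^2" if "3 \<le> B" using power_mono[OF that, of 2] by simp
  ultimately have Q: "Q \<noteq> 0" "4 * Q^2 < 3 * B^2" "int d mod 4 = 1 \<or> even Q"
    by (auto simp: Q_def)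
  have above: "1 + (qhalf A B)^2 \<le> (qhalf P Q)^2 + (qhalf A B)^2 * (\<sigma> (qhalf P Q))^2"
    if "even (P - Q)" for P
  proof (rule unit_reducibleD[OF assms(1-4)])
    show "qhalf P Q \<in> qints d" using that Q(3)
      by (intro qhalf_in_qints integral_coords_if_even_diff)
    show "qhalf P Q \<noteq> 0" using Q(1) by (simp add: qhalf_eq_0_iff)
  qed
  from assms(7) show False
  proof
    assume norm: "A^2 - int d * B^2 = 4"
    obtain P where P: "even (P - Q)" "(A * P - B * int d * Q)^2 \<le> A^2"
      using exists_same_parity_near[OF assms(5)] by blast
    have "4 * A \<le> A * (P^2 + int d * Q^2) - 2 * B * int d * P * Q"
      using above[OF P(1)] above_chord_iff_norm_pos[OF norm assms(5,6)] by blast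
    moreover have "A * (P^2 + int d * Q^2) - 2 * B * int d * P * Q < 4 * A"
      using norm_pos_form_less[OF assms(5) _ norm P(2) Q(2)] by simp
    ultimately show False by simp
  next
    assume norm: "A^2 - int d * B^2 = -4"
    obtain P where P: "even (P - Q)" "(B * P - A * Q)^2 \<le> B^2"
      using exists_same_parity_near[OF assms(6)] by blast
    have "4 * B \<le> B * (P^2 + int d * Q^2) - 2 * A * P * Q"
      using above[OF P(1)] above_chord_iff_norm_neg[OF norm assms(5,6)] by blast
    moreover have "B * (P^2 + int d * Q^2) - 2 * A * P * Q < 4 * B"
      using norm_neg_form_less[OF assms(6) norm P(2) Q(2)] .
    ultimately show False by simp
  qed
qed

end

theorem theorem4:
  fixes d :: nat
  assumes "d > 1" and "squarefree d"
  shows "unit_reducible d \<longleftrightarrow>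
           ((\<exists>m::nat. odd m \<and> int d = int m ^ 2 + 1) \<or>
            (\<exists>m::nat. even m \<and> int d = int m ^ 2 - 1) \<or>
            (\<exists>m::nat. odd m \<and> int d = int m ^ 2 + 4) \<or>
            (\<exists>m::nat. odd m \<and> m > 3 \<and> int d = int m ^ 2 - 4))"
proof -
  interpret real_quadratic_field d using assms by unfold_locales
  have fundamental_unit_coords: "\<exists>A>0. (A^2 - int d = 4 \<or> A^2 - int d = -4) \<or>
      ((A^2 - int d * 2^2 = 4 \<or> A^2 - int d * 2^2 = -4) \<and> int d mod 4 \<noteq> 1)"
    if ur: "unit_reducible d"
  proof -
    obtain \<epsilon> where \<epsilon>: "\<epsilon> \<in> qunits d" "1 < \<epsilon>" "\<And>u. u \<in> qunits d \<Longrightarrow> 1 < u \<Longrightarrow> \<epsilon> \<le> u"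
      using exists_fundamental_unit[OF unit_reducible_imp_unit_gt_1[OF ur]] by blast
    obtain A B where AB: "\<epsilon> = qhalf A B" "0 < A" "0 < B"
      and norm: "A^2 - int d * B^2 = 4 \<or> A^2 - int d * B^2 = -4"
      using qunits_gt_1_coords[OF \<epsilon>(1,2)] by blast
    have "B = 1 \<or> (B = 2 \<and> int d mod 4 \<noteq> 1)"
      using unit_reducible_fundamental_unit_coeff[OF ur \<epsilon>[unfolded AB(1)] AB(2,3) norm] .
    then show ?thesis using AB(2) norm by auto
  qed
  show ?thesis
    using fundamental_unit_coords squarefree_pell_4_coeff_1[OF assms(2,1)]
      squarefree_pell_4_coeff_2[OF assms(2)] unit_reducible_if_sq_plus_1
      unit_reducible_if_sq_minus_1 unit_reducible_if_sq_plus_4 unit_reducible_if_sq_minus_4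
    by blast
qed

end
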